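(* Suppose $\tilde B$ has nondegenerate coefficients. Then $\{\vartheta_m:m\in M^\circ_{\mathrm{uf}}\}$ is a reduced basis for the small canonical algebra $\underline{\mathrm{can}}(\tilde B)$.
   Context: Setup. $\Bbbk$ a field of characteristic $0$; $I$ finite, $I_{\mathrm{uf}}\subseteq I$, $I_{\mathrm{fr}}=I\setminus I_{\mathrm{uf}}$; $\tilde B=[\epsilon_{ij}]_{i\in I_{\mathrm{uf}},j\in I}$ an integer matrix with skew-symmetrizable square part $B$ (positive integers $d_i$, $d_i\epsilon_{ij}=-d_j\epsilon_{ji}$). $N_{\mathrm{uf}}$ lattice with basis $(e_i)_{i\in I_{\mathrm{uf}}}$ (componentwise order; $N^{0+}_{\mathrm{uf}}$ nonnegative elements, $N^+_{\mathrm{uf}}=N^{0+}_{\mathrm{uf}}\setminus\{0\}$), $M^\circ_{\mathrm{uf}}$ lattice with basis $(f_i)$, $V^*=M^\circ_{\mathrm{uf}}\otimes\mathbb R$, $\langle f_i,e_j\rangle=\delta_{ij}/d_i$. For $n=\sum a_ie_i$, $nB=\sum a_i\epsilon_{ij}f_j$. Indeterminates $(z_i)_{i\in I}$, $z^m=\prod z_i^{c_i}$ for $m=\sum c_if_i$; $\sigma_i=\prod_{j\in I_{\mathrm{fr}}}z_j^{\epsilon_{ij}}$, $\zeta_i=\prod_{j\in I}z_j^{\epsilon_{ij}}$; $\sigma^n=\prod\sigma_i^{a_i}$, $\zeta^n=\prod\zeta_i^{a_i}$; $\zeta^n=z^{nB}\sigma^n$. $\tilde B$ has nondegenerate coefficients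 if the rows of $[\epsilon_{ij}]_{i\in I_{\mathrm{uf}},j\in I_{\mathrm{fr}}}$ are linearly independent. Theta functions: $\vartheta_m$ ($m\in M^\circ_{\mathrm{uf}}$) is the theta function of Gross–Hacking–Keel–Kontsevich for the cluster scattering diagram of $\tilde B$ with generic basepoint in the positive orthant, constructed in $V^*$ as a sum over broken lines; the facts used are that $\vartheta_m=z^mF_m$ with $F_m\in\Bbbk[[\zeta]]$ of constant term $1$, and that products expand as $\vartheta_{p_1}\vartheta_{p_2}=\sum_m a(p_1,p_2,m)\vartheta_m$ (a convergent sum) with each $a(p_1,p_2,m)$ a formal power series in $(\sigma_i)$ with nonnegative integer coefficients. Small canonical algebra. $\Bbbk((\zeta))$ is the ring of formal series $\sum_{n\in N_{\mathrm{uf}}}c_n\zeta^n$ whose support has a componentwise lower bound. $\mathcal A=\bigoplus_{m\in M^\circ_{\mathrm{uf}}}z^m\Bbbk((\zeta))$ with the obvious multiplication (identified, by nondegeneracy, with series of Laurent monomials in $z$); for $v\in z^m\Bbbk((\zeta))$ set $\mathbf g(v)=m$ (so $\mathbf g(\sigma^n)=-nB$). $\underline{\mathrm{can}}(\tilde B)$ is the $\Bbbk[\sigma^{\pm1}]$-subalgebra of $\mathcal A$ generated by all $\vartheta_m$. A sequence in $\Bbbk((\zeta))$ converges if all its terms' supports have a common componentwise lower bound and each coefficient eventually stabilizes; a sequence $(v_k)$ in $\mathcal A$ converges if only finitely many $m$ occur with nonzero component in any $v_k$ and each component sequence converges in $\Bbbk((\zeta))$; a series converges if its partial sums do (independent of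 ordering). A countable subset $\overline{\mathcal U}\subseteq\underline{\mathrm{can}}(\tilde B)$ is a basis if every $v\in\underline{\mathrm{can}}(\tilde B)$ equals $\sum_{u}a_uu$ (convergent) for a unique function $u\mapsto a_u\in\Bbbk$. A reduced basis is a subset $\{u_m:m\in M^\circ_{\mathrm{uf}}\}\subseteq\underline{\mathrm{can}}(\tilde B)$ with each $u_m\in z^m\Bbbk[[\zeta]]$ having constant coefficient $1$, such that $\{\sigma^nu_m:n\in N_{\mathrm{uf}},m\in M^\circ_{\mathrm{uf}}\}$ is a basis. *)

theory Defs
  imports Main "HOL-Library.Function_Algebras" "HOL-Library.Countable_Set"
begin

(* Lattices N_uf and M_uf are both modelled as integer vectors indexed by I_uf:
   functions 'i => int vanishing outside Iuf (coordinates w.r.t. the bases e_i, resp. f_i). *)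
definition lat :: "'i set \<Rightarrow> ('i \<Rightarrow> int) set" where
  "lat Iuf = {x. \<forall>i. i \<notin> Iuf \<longrightarrow> x i = 0}"

definition nle :: "'i set \<Rightarrow> ('i \<Rightarrow> int) \<Rightarrow> ('i \<Rightarrow> int) \<Rightarrow> bool" where
  "nle Iuf a b \<longleftrightarrow> (\<forall>i\<in>Iuf. a i \<le> b i)"

(* Elements of the ambient ring A = (+)_m z^m k((zeta)) are represented by their coefficient
   functions: x m n = coefficient of z^m zeta^n. *)
type_synonym ('i, 'k) ser = "('i \<Rightarrow> int) \<Rightarrow> ('i \<Rightarrow> int) \<Rightarrow> 'k"

definition inA :: "'i set \<Rightarrow> ('i, 'k::zero) ser \<Rightarrow> bool" where
  "inA Iuf x \<longleftrightarrow>
     (\<forall>m n. x m n \<noteq> 0 \<longrightarrow> m \<in> lat Iuf \<and> n \<in> lat Iuf)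
   \<and> finite {m. \<exists>n. x m n \<noteq> 0}
   \<and> (\<forall>m. \<exists>b. \<forall>n. x m n \<noteq> 0 \<longrightarrow> nle Iuf b n)"

definition mulA :: "('i, 'k::comm_ring_1) ser \<Rightarrow> ('i, 'k) ser \<Rightarrow> ('i, 'k) ser" where
  "mulA x y = (\<lambda>m n. \<Sum>p\<in>{(m1, n1). x m1 n1 \<noteq> 0 \<and> y (m - m1) (n - n1) \<noteq> 0}.
                        x (fst p) (snd p) * y (m - fst p) (n - snd p))"

definition smultA :: "'k::times \<Rightarrow> ('i, 'k) ser \<Rightarrow> ('i, 'k) ser" where
  "smultA c x = (\<lambda>m n. c * x m n)"

definition nB :: "'i set \<Rightarrow> ('i \<Rightarrow> 'i \<Rightarrow> int) \<Rightarrow> ('i \<Rightarrow> int) \<Rightarrow> ('i \<Rightarrow> int)" where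
  "nB Iuf eps n = (\<lambda>j. if j \<in> Iuf then (\<Sum>i\<in>Iuf. n i * eps i j) else 0)"

(* sigma^n = z^{-nB} zeta^n, so g(sigma^n) = -nB *)
definition sigmaA :: "'i set \<Rightarrow> ('i \<Rightarrow> 'i \<Rightarrow> int) \<Rightarrow> ('i \<Rightarrow> int) \<Rightarrow> ('i, 'k::{zero,one}) ser" where
  "sigmaA Iuf eps n = (\<lambda>m k. if m = - nB Iuf eps n \<and> k = n then 1 else 0)"

definition seq_convA :: "'i set \<Rightarrow> (nat \<Rightarrow> ('i, 'k::zero) ser) \<Rightarrow> ('i, 'k) ser \<Rightarrow> bool" where
  "seq_convA Iuf s v \<longleftrightarrow>
     finite {m. \<exists>k n. s k m n \<noteq> 0}
   \<and> (\<forall>m. (\<exists>b. \<forall>k n. s k m n \<noteq> 0 \<longrightarrow> nle Iuf b n)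
         \<and> (\<forall>n. eventually (\<lambda>k. s k m n = v m n) sequentially))"

definition has_sumA :: "'i set \<Rightarrow> ('j \<Rightarrow> ('i, 'k::comm_monoid_add) ser) \<Rightarrow> 'j set \<Rightarrow> ('i, 'k) ser \<Rightarrow> bool" where
  "has_sumA Iuf f J v \<longleftrightarrow>
     (finite J \<and> v = (\<Sum>j\<in>J. f j))
   \<or> (infinite J \<and> (\<forall>e. bij_betw e (UNIV :: nat set) J \<longrightarrow>
                           seq_convA Iuf (\<lambda>k. \<Sum>i<k. f (e i)) v))"

inductive_set canA :: "'i set \<Rightarrow> ('i \<Rightarrow> 'i \<Rightarrow> int) \<Rightarrow> (('i \<Rightarrow> int) \<Rightarrow> ('i, 'k::comm_ring_1) ser)
                        \<Rightarrow> ('i, 'k) ser set"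
  for Iuf eps theta where
  sigma: "n \<in> lat Iuf \<Longrightarrow> smultA c (sigmaA Iuf eps n) \<in> canA Iuf eps theta"
| theta: "m \<in> lat Iuf \<Longrightarrow> theta m \<in> canA Iuf eps theta"
| add: "x \<in> canA Iuf eps theta \<Longrightarrow> y \<in> canA Iuf eps theta \<Longrightarrow> x + y \<in> canA Iuf eps theta"
| mul: "x \<in> canA Iuf eps theta \<Longrightarrow> y \<in> canA Iuf eps theta \<Longrightarrow> mulA x y \<in> canA Iuf eps theta"
| smult: "x \<in> canA Iuf eps theta \<Longrightarrow> smultA c x \<in> canA Iuf eps theta"

definition is_basisA :: "'i set \<Rightarrow> ('i, 'k::comm_ring_1) ser set \<Rightarrow> ('i, 'k) ser set \<Rightarrow> bool" where
  "is_basisA Iuf C U \<longleftrightarrow> U \<subseteq> C \<and> countable U \<and>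
     (\<forall>v\<in>C. \<exists>a. has_sumA Iuf (\<lambda>u. smultA (a u) u) U v
                 \<and> (\<forall>a'. has_sumA Iuf (\<lambda>u. smultA (a' u) u) U v \<longrightarrow> (\<forall>u\<in>U. a' u = a u)))"

definition pointed_at :: "'i set \<Rightarrow> ('i \<Rightarrow> int) \<Rightarrow> ('i, 'k::{zero,one}) ser \<Rightarrow> bool" where
  "pointed_at Iuf m x \<longleftrightarrow>
     (\<forall>m' n. x m' n \<noteq> 0 \<longrightarrow> m' = m \<and> n \<in> lat Iuf \<and> nle Iuf 0 n) \<and> x m 0 = 1"

definition reduced_basisA :: "'i set \<Rightarrow> ('i \<Rightarrow> 'i \<Rightarrow> int) \<Rightarrow> ('i, 'k::comm_ring_1) ser set
                              \<Rightarrow> (('i \<Rightarrow> int) \<Rightarrow> ('i, 'k) ser) \<Rightarrow> bool" where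
  "reduced_basisA Iuf eps C u \<longleftrightarrow>
     (\<forall>m\<in>lat Iuf. u m \<in> C \<and> pointed_at Iuf m (u m))
   \<and> is_basisA Iuf C {mulA (sigmaA Iuf eps n) (u m) | n m. n \<in> lat Iuf \<and> m \<in> lat Iuf}"

end

(*
  Write sigma_theta (k, j) for sigma^k theta_j = z^(j - kB) zeta^k F_j. By pointedness of theta_j,
  all monomials of sigma_theta (k, j) have z-degree j - kB and zeta-exponent >= k, and the
  monomial z^(j - kB) zeta^k has coefficient 1. So in each z-degree m the family sigma^k theta_(m + kB),
  indexed by k, is unitriangular for the componentwise order on zeta-exponents.
  Existence of an expansion: an element of A has, in each degree m, exponents bounded below by
  some b; there are only finitely many exponents between b and any given n, so the coefficients
  are determined by well-founded recursion.
  Uniqueness: in a nontrivial combination, a minimal index k with nonzero coefficient contributes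
  to the monomial z^m zeta^k alone, and convergence of the sum forces that coefficient to vanish.
*)

theory Submission
  imports Defs "HOL-Library.FuncSet"
begin

section \<open>Lattice points\<close>

lemma lat_add [intro]: "a \<in> lat I \<Longrightarrow> b \<in> lat I \<Longrightarrow> a + b \<in> lat I"
  and lat_diff [intro]: "a \<in> lat I \<Longrightarrow> b \<in> lat I \<Longrightarrow> a - b \<in> lat I"
  and lat_uminus [intro]: "a \<in> lat I \<Longrightarrow> - a \<in> lat I"
  and lat_nB [simp, intro]: "nB I eps k \<in> lat I"
  by (simp_all add: lat_def nB_def)

lemma lat_eqI:
  assumes "a \<in> lat I" "b \<in> lat I" "\<forall>i\<in>I. a i = b i"
  shows "a = b"
  using assms by (auto simp: lat_def fun_eq_iff)

lemma nle_refl [simp]: "nle I a a"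
  and nle_trans: "nle I a b \<Longrightarrow> nle I b c \<Longrightarrow> nle I a c"
  and nle_add: "nle I a b \<Longrightarrow> nle I c d \<Longrightarrow> nle I (a + c) (b + d)"
  and nle_0_diff_iff: "nle I 0 (a - b) \<longleftrightarrow> nle I b a"
  by (force simp: nle_def add_mono)+

lemma nle_antisym:
  "nle I a b \<Longrightarrow> nle I b a \<Longrightarrow> a \<in> lat I \<Longrightarrow> b \<in> lat I \<Longrightarrow> a = b"
  by (rule lat_eqI) (auto simp: nle_def intro: order_antisym)

lemma finite_lat_has_minimal:
  assumes "finite T" "T \<noteq> {}" "T \<subseteq> lat I"
  shows "\<exists>k0\<in>T. \<forall>k\<in>T. nle I k k0 \<longrightarrow> k = k0"
proof -
  let ?R = "\<lambda>k k'. nle I k k' \<and> k \<noteq> k'"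
  have "asymp_on T ?R" "transp_on T ?R"
    using assms(3) nle_antisym nle_trans unfolding asymp_on_def transp_on_def by blast+
  then show ?thesis
    using Finite_Set.bex_min_element[OF assms(1) _ _ assms(2)] by blast
qed

lemma lat_subset_zero_extension:
  "{k \<in> lat I. \<forall>i\<in>I. k i \<in> A i} \<subseteq> (\<lambda>g i. if i \<in> I then g i else 0) ` (\<Pi>\<^sub>E i\<in>I. A i)"
proof
  fix k assume "k \<in> {k \<in> lat I. \<forall>i\<in>I. k i \<in> A i}"
  then have "restrict k I \<in> (\<Pi>\<^sub>E i\<in>I. A i)" "k = (\<lambda>i. if i \<in> I then restrict k I i else 0)"
    by (auto simp: lat_def)
  then show "k \<in> (\<lambda>g i. if i \<in> I then g i else 0) ` (\<Pi>\<^sub>E i\<in>I. A i)" by blast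
qed

definition lat_interval :: "'i set \<Rightarrow> ('i \<Rightarrow> int) \<Rightarrow> ('i \<Rightarrow> int) \<Rightarrow> ('i \<Rightarrow> int) set" where
  "lat_interval I a b = {k \<in> lat I. nle I a k \<and> nle I k b}"

lemma finite_lat_interval:
  assumes "finite I"
  shows "finite (lat_interval I a b)"
proof (rule finite_subset)
  show "lat_interval I a b \<subseteq> (\<lambda>g i. if i \<in> I then g i else 0) ` (\<Pi>\<^sub>E i\<in>I. {a i..b i})"
    using lat_subset_zero_extension[of I "\<lambda>i. {a i..b i}"] by (auto simp: lat_interval_def nle_def)
qed (use assms in \<open>simp add: finite_PiE\<close>)

lemma countable_lat:
  assumes "finite I"
  shows "countable (lat I)"
proof (rule countable_subset)
  show "lat I \<subseteq> (\<Union>N::nat. lat_interval I (\<lambda>_. - int N) (\<lambda>_. int N))"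
  proof
    fix k assume "k \<in> lat I"
    moreover have "\<bar>k i\<bar> \<le> (\<Sum>i\<in>I. \<bar>k i\<bar>)" if "i \<in> I" for i
      using member_le_sum[OF that, of "\<lambda>i. \<bar>k i\<bar>"] assms by auto
    then have "nle I (\<lambda>_. - int (nat (\<Sum>i\<in>I. \<bar>k i\<bar>))) k \<and> nle I k (\<lambda>_. int (nat (\<Sum>i\<in>I. \<bar>k i\<bar>)))"
      unfolding nle_def by force
    ultimately show "k \<in> (\<Union>N::nat. lat_interval I (\<lambda>_. - int N) (\<lambda>_. int N))"
      unfolding lat_interval_def by blast
  qed
qed (use finite_lat_interval[OF assms] in \<open>auto intro: countable_finite\<close>)

definition lat_below :: "'i set \<Rightarrow> ('i \<Rightarrow> int) \<Rightarrow> (('i \<Rightarrow> int) \<times> ('i \<Rightarrow> int)) set" where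
  "lat_below I b = {(k, n). k \<in> lat I \<and> nle I b k \<and> nle I k n \<and> (\<exists>i\<in>I. k i < n i)}"

lemma wf_lat_below:
  assumes "finite I"
  shows "wf (lat_below I b)"
proof (rule wf_subset[OF wf_measure])
  show "lat_below I b \<subseteq> measure (\<lambda>n. nat (\<Sum>i\<in>I. n i - b i))"
    unfolding lat_below_def
  proof clarify
    fix k n i assume "nle I b k" "nle I k n" "i \<in> I" "k i < n i"
    then have "(\<Sum>i\<in>I. k i - b i) < (\<Sum>i\<in>I. n i - b i)" "0 \<le> (\<Sum>i\<in>I. k i - b i)"
      using assms by (auto simp: nle_def intro!: sum_strict_mono_ex1 sum_nonneg)
    then show "(k, n) \<in> measure (\<lambda>n. nat (\<Sum>i\<in>I. n i - b i))"
      by simp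
  qed
qed

lemma lat_below_irrefl [simp]: "(n, n) \<notin> lat_below I b"
  by (simp add: lat_below_def)

lemma lat_below_bound: "(k, n) \<in> lat_below I b \<Longrightarrow> nle I b n"
  unfolding lat_below_def by (blast intro: nle_trans)

lemma lat_interval_eq_insert_lat_below:
  assumes n: "n \<in> lat I" "nle I b n"
  shows "lat_interval I b n = insert n {k. (k, n) \<in> lat_below I b}"
proof (intro equalityI subsetI)
  fix k assume k: "k \<in> lat_interval I b n"
  show "k \<in> insert n {k. (k, n) \<in> lat_below I b}"
  proof (cases "k = n")
    case False
    then have "\<exists>i\<in>I. k i \<noteq> n i"
      using k n lat_eqI unfolding lat_interval_def by blast
    with k show ?thesis
      by (auto simp: lat_interval_def lat_below_def nle_def order.order_iff_strict)
  qed simp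
qed (use n in \<open>auto simp: lat_interval_def lat_below_def\<close>)

section \<open>The ring A\<close>

lemma sum_ser_apply: "(\<Sum>p\<in>F. f p) m n = (\<Sum>p\<in>F. f p m n :: 'a::comm_monoid_add)"
  by (induction F rule: infinite_finite_induct) auto

lemma sum_ser_nonzeroD: "(\<Sum>p\<in>F. f p) m n \<noteq> (0 :: 'a::comm_monoid_add) \<Longrightarrow> \<exists>p\<in>F. f p m n \<noteq> 0"
  using sum.not_neutral_contains_not_neutral[of "\<lambda>p. f p m n" F] by (auto simp: sum_ser_apply)

lemma mulA_sigmaA:
  fixes y :: "('i, 'k::comm_ring_1) ser"
  shows "mulA (sigmaA I eps k) y m n = y (m + nB I eps k) (n - k)"
proof (cases "y (m + nB I eps k) (n - k) = 0")
  case True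
  then have "{(m1, n1). (sigmaA I eps k :: ('i, 'k) ser) m1 n1 \<noteq> 0 \<and> y (m - m1) (n - n1) \<noteq> 0} = {}"
    by (auto simp: sigmaA_def)
  then show ?thesis
    using True unfolding mulA_def by (simp only: sum.empty)
next
  case False
  then have "{(m1, n1). (sigmaA I eps k :: ('i, 'k) ser) m1 n1 \<noteq> 0 \<and> y (m - m1) (n - n1) \<noteq> 0}
      = {(- nB I eps k, k)}"
    by (auto simp: sigmaA_def)
  then show ?thesis
    by (simp add: mulA_def sigmaA_def)
qed

lemma mulA_nonzeroD:
  assumes "mulA x y m n \<noteq> 0"
  shows "\<exists>m1 n1. x m1 n1 \<noteq> 0 \<and> y (m - m1) (n - n1) \<noteq> 0"
  using sum.not_neutral_contains_not_neutral[OF assms[unfolded mulA_def]] by blast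

lemma inA_uniform_bound:
  assumes "inA I x"
  obtains B where "\<And>m n. x m n \<noteq> 0 \<Longrightarrow> nle I B n"
proof -
  have "\<forall>m. \<exists>b. \<forall>n. x m n \<noteq> 0 \<longrightarrow> nle I b n"
    using assms by (simp add: inA_def)
  then obtain b where b: "\<And>m n. x m n \<noteq> 0 \<Longrightarrow> nle I (b m) n"
    using choice[of "\<lambda>m b. \<forall>n. x m n \<noteq> 0 \<longrightarrow> nle I b n"] by blast
  define M where "M = {m. \<exists>n. x m n \<noteq> 0}"
  have "finite M" using assms by (simp add: inA_def M_def)
  show ?thesis
  proof
    fix m n assume "x m n \<noteq> 0"
    then have "m \<in> M" "nle I (b m) n" using b by (auto simp: M_def)
    moreover have "Min (insert 0 ((\<lambda>m. b m i) ` M)) \<le> b m i" for i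
      using \<open>finite M\<close> \<open>m \<in> M\<close> by (simp add: Min_le_iff)
    ultimately show "nle I (\<lambda>i. Min (insert 0 ((\<lambda>m. b m i) ` M))) n"
      unfolding nle_def by (meson order_trans)
  qed
qed

lemma inA_support_subset:
  assumes "inA I x" "\<And>m n. y m n \<noteq> 0 \<Longrightarrow> x m n \<noteq> 0"
  shows "inA I y"
proof -
  have "{m. \<exists>n. y m n \<noteq> 0} \<subseteq> {m. \<exists>n. x m n \<noteq> 0}"
    using assms(2) by blast
  with assms show ?thesis
    unfolding inA_def by (metis (no_types, lifting) finite_subset)
qed

lemma inA_add:
  fixes x y :: "('i, 'k::comm_monoid_add) ser"
  assumes "inA I x" "inA I y"
  shows "inA I (x + y)"
proof -
  have nz: "(x + y) m n \<noteq> 0 \<Longrightarrow> x m n \<noteq> 0 \<or> y m n \<noteq> 0" for m n by auto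
  have "{m. \<exists>n. (x + y) m n \<noteq> 0} \<subseteq> {m. \<exists>n. x m n \<noteq> 0} \<union> {m. \<exists>n. y m n \<noteq> 0}"
    using nz by blast
  moreover have "finite {m. \<exists>n. x m n \<noteq> 0}" "finite {m. \<exists>n. y m n \<noteq> 0}"
    using assms by (simp_all add: inA_def)
  moreover have "\<exists>b. \<forall>n. (x + y) m n \<noteq> 0 \<longrightarrow> nle I b n" for m
  proof -
    obtain b1 b2 where "\<forall>n. x m n \<noteq> 0 \<longrightarrow> nle I b1 n" "\<forall>n. y m n \<noteq> 0 \<longrightarrow> nle I b2 n"
      using assms unfolding inA_def by blast
    then have "\<forall>n. (x + y) m n \<noteq> 0 \<longrightarrow> nle I (\<lambda>i. min (b1 i) (b2 i)) n"
      using nz unfolding nle_def by (metis min.coboundedI1 min.coboundedI2)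
    then show ?thesis by blast
  qed
  ultimately show ?thesis
    using assms nz unfolding inA_def by (metis (no_types, lifting) finite_Un finite_subset)
qed

lemma inA_smultA: "inA I x \<Longrightarrow> inA I (smultA (c::'k::mult_zero) x)"
  by (erule inA_support_subset) (auto simp: smultA_def)

lemma inA_mulA:
  fixes x y :: "('i, 'k::comm_ring_1) ser"
  assumes x: "inA I x" and y: "inA I y"
  shows "inA I (mulA x y)"
proof -
  obtain bx where bx: "\<And>m n. x m n \<noteq> 0 \<Longrightarrow> nle I bx n"
    using inA_uniform_bound[OF x] by blast
  obtain b_y where b_y: "\<And>m n. y m n \<noteq> 0 \<Longrightarrow> nle I b_y n"
    using inA_uniform_bound[OF y] by blast
  have split: "\<exists>m1 n1 m2 n2. x m1 n1 \<noteq> 0 \<and> y m2 n2 \<noteq> 0 \<and> m = m1 + m2 \<and> n = n1 + n2"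
    if "mulA x y m n \<noteq> 0" for m n
    using mulA_nonzeroD[OF that] by (metis add.commute diff_add_cancel)
  let ?supp = "\<lambda>x. {m. \<exists>n. x m n \<noteq> 0}"
  have "?supp (mulA x y) \<subseteq> (\<lambda>(m1, m2). m1 + m2) ` (?supp x \<times> ?supp y)"
    using split by fastforce
  moreover have "finite (?supp x)" "finite (?supp y)"
    using x y by (simp_all add: inA_def)
  moreover have "m \<in> lat I \<and> n \<in> lat I \<and> nle I (bx + b_y) n" if "mulA x y m n \<noteq> 0" for m n
    using split[OF that] x y bx b_y unfolding inA_def by (blast intro: nle_add)
  ultimately show ?thesis
    unfolding inA_def by (metis (no_types, lifting) finite_SigmaI finite_imageI finite_subset)
qed

lemma inA_sigmaA: "n \<in> lat I \<Longrightarrow> inA I (sigmaA I eps n :: ('i, 'k::zero_neq_one) ser)"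
  unfolding inA_def sigmaA_def by (auto intro: exI[of _ n])

lemma inA_pointed_at: "pointed_at I m x \<Longrightarrow> m \<in> lat I \<Longrightarrow> inA I x"
  unfolding inA_def pointed_at_def by (auto intro: finite_subset[of _ "{m}"])

section \<open>Convergent sums\<close>

lemma eventually_subset_image_lessThan:
  assumes "bij_betw e (UNIV :: nat set) J" "finite S" "S \<subseteq> J"
  shows "\<forall>\<^sub>F k in sequentially. S \<subseteq> e ` {..<k}"
proof -
  have "finite (e -` S)"
    using assms by (simp add: bij_betw_def finite_vimageI)
  then obtain N where "e -` S \<subseteq> {..<N}"
    using finite_nat_bounded by blast
  have "S \<subseteq> e ` {..<k}" if "N \<le> k" for k
  proof
    fix p assume "p \<in> S"
    then obtain i where "p = e i"
      using assms(1,3) by (auto simp: bij_betw_def)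
    with \<open>p \<in> S\<close> \<open>e -` S \<subseteq> {..<N}\<close> that have "i < k"
      by auto
    with \<open>p = e i\<close> show "p \<in> e ` {..<k}"
      by blast
  qed
  then show ?thesis
    unfolding eventually_sequentially by blast
qed

lemma eventually_partial_sums_eq:
  fixes f :: "'j \<Rightarrow> ('i, 'k::comm_monoid_add) ser"
  assumes e: "bij_betw e UNIV J" and S: "finite S" "S \<subseteq> J" "\<forall>p\<in>J - S. f p m n = 0"
  shows "\<forall>\<^sub>F k in sequentially. (\<Sum>i<k. f (e i)) m n = (\<Sum>p\<in>S. f p m n)"
  using eventually_subset_image_lessThan[OF e S(1,2)]
proof eventually_elim
  case (elim k)
  have "inj_on e {..<k}"
    using e by (auto simp: bij_betw_def inj_on_def)
  then have "(\<Sum>i<k. f (e i)) m n = (\<Sum>p\<in>e ` {..<k}. f p m n)"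
    by (simp add: sum_ser_apply sum.reindex)
  also have "\<dots> = (\<Sum>p\<in>S. f p m n)"
    using e by (intro sum.mono_neutral_right) (use elim S in \<open>auto simp: bij_betw_def\<close>)
  finally show ?case .
qed

lemma seq_convA_partial_sums:
  fixes f :: "'j \<Rightarrow> ('i, 'k::comm_monoid_add) ser"
  assumes e: "bij_betw e UNIV J"
    and supp: "finite {m. \<exists>p\<in>J. \<exists>n. f p m n \<noteq> 0}"
    and bound: "\<And>p m n. p \<in> J \<Longrightarrow> f p m n \<noteq> 0 \<Longrightarrow> nle I B n"
    and pointwise: "\<And>m n. \<exists>S. finite S \<and> S \<subseteq> J \<and> (\<forall>p\<in>J - S. f p m n = 0) \<and> v m n = (\<Sum>p\<in>S. f p m n)"
  shows "seq_convA I (\<lambda>k. \<Sum>i<k. f (e i)) v"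
  unfolding seq_convA_def
proof (intro conjI allI)
  have e_in: "e i \<in> J" for i
    using e by (auto simp: bij_betw_def)
  have nz: "\<exists>i. f (e i) m n \<noteq> 0" if "(\<Sum>i<k. f (e i)) m n \<noteq> 0" for k m n
    using sum_ser_nonzeroD[OF that] by blast
  have "{m. \<exists>k n. (\<Sum>i<k. f (e i)) m n \<noteq> 0} \<subseteq> {m. \<exists>p\<in>J. \<exists>n. f p m n \<noteq> 0}"
  proof
    fix m assume "m \<in> {m. \<exists>k n. (\<Sum>i<k. f (e i)) m n \<noteq> 0}"
    then obtain i n where "f (e i) m n \<noteq> 0"
      using nz by blast
    then show "m \<in> {m. \<exists>p\<in>J. \<exists>n. f p m n \<noteq> 0}"
      using e_in by blast
  qed
  then show "finite {m. \<exists>k n. (\<Sum>i<k. f (e i)) m n \<noteq> 0}"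
    using supp by (rule finite_subset)
  show "\<exists>b. \<forall>k n. (\<Sum>i<k. f (e i)) m n \<noteq> 0 \<longrightarrow> nle I b n" for m
  proof (intro exI allI impI)
    fix k n assume "(\<Sum>i<k. f (e i)) m n \<noteq> 0"
    then obtain i where "f (e i) m n \<noteq> 0"
      using nz by blast
    then show "nle I B n"
      by (rule bound[OF e_in])
  qed
  show "\<forall>\<^sub>F k in sequentially. (\<Sum>i<k. f (e i)) m n = v m n" for m n
  proof -
    obtain S where S: "finite S" "S \<subseteq> J" "\<forall>p\<in>J - S. f p m n = 0" "v m n = (\<Sum>p\<in>S. f p m n)"
      using pointwise[of m n] by blast
    then show ?thesis
      using eventually_partial_sums_eq[where f = f and m = m and n = n, OF e S(1-3)] by simp
  qed
qed

lemma has_sumA_intro: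
  fixes f :: "'j \<Rightarrow> ('i, 'k::comm_monoid_add) ser"
  assumes supp: "finite {m. \<exists>p\<in>J. \<exists>n. f p m n \<noteq> 0}"
    and bound: "\<And>p m n. p \<in> J \<Longrightarrow> f p m n \<noteq> 0 \<Longrightarrow> nle I B n"
    and pointwise: "\<And>m n. \<exists>S. finite S \<and> S \<subseteq> J \<and> (\<forall>p\<in>J - S. f p m n = 0) \<and> v m n = (\<Sum>p\<in>S. f p m n)"
  shows "has_sumA I f J v"
proof (cases "finite J")
  case True
  have "v m n = (\<Sum>p\<in>J. f p) m n" for m n
  proof -
    obtain S where S: "finite S" "S \<subseteq> J" "\<forall>p\<in>J - S. f p m n = 0" "v m n = (\<Sum>p\<in>S. f p m n)"
      using pointwise[of m n] by blast
    have "(\<Sum>p\<in>S. f p m n) = (\<Sum>p\<in>J. f p m n)"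
      by (rule sum.mono_neutral_left) (use True S in auto)
    then show ?thesis
      using S(4) by (simp add: sum_ser_apply)
  qed
  then show ?thesis
    using True by (simp add: has_sumA_def fun_eq_iff)
next
  case False
  then show ?thesis
    using seq_convA_partial_sums[OF _ supp bound pointwise] by (simp add: has_sumA_def)
qed

lemma has_sumA_cong:
  assumes "\<And>j. j \<in> J \<Longrightarrow> f j = g j"
  shows "has_sumA I f J v \<longleftrightarrow> has_sumA I g J v"
proof -
  have "(\<lambda>k. \<Sum>i<k. f (e i)) = (\<lambda>k. \<Sum>i<k. g (e i))" if "bij_betw e (UNIV :: nat set) J" for e
    using assms that by (auto simp: bij_betw_def intro!: sum.cong)
  then show ?thesis
    unfolding has_sumA_def using assms by (auto cong: sum.cong)
qed

lemma has_sumA_reindex: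
  assumes "inj_on h P"
  shows "has_sumA I f (h ` P) v \<longleftrightarrow> has_sumA I (f \<circ> h) P v"
proof (cases "finite P")
  case True
  then show ?thesis
    using assms by (simp add: has_sumA_def sum.reindex)
next
  case False
  have h: "bij_betw h P (h ` P)"
    using assms by (rule inj_on_imp_bij_betw)
  have bij: "bij_betw e UNIV (h ` P) \<longleftrightarrow> (\<exists>e'. bij_betw e' UNIV P \<and> e = h \<circ> e')" for e :: "nat \<Rightarrow> _"
  proof
    assume e: "bij_betw e UNIV (h ` P)"
    then have "bij_betw (the_inv_into P h \<circ> e) UNIV P"
      using bij_betw_trans bij_betw_the_inv_into[OF h] by blast
    moreover have "e = h \<circ> (the_inv_into P h \<circ> e)"
    proof
      fix i
      have "e i \<in> h ` P" using e by (auto simp: bij_betw_def)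
      then show "e i = (h \<circ> (the_inv_into P h \<circ> e)) i"
        using f_the_inv_into_f[OF assms] by simp
    qed
    ultimately
    show "\<exists>e'. bij_betw e' UNIV P \<and> e = h \<circ> e'" by blast
  qed (use bij_betw_trans h in blast)
  have "(\<forall>e. bij_betw e UNIV (h ` P) \<longrightarrow> seq_convA I (\<lambda>k. \<Sum>i<k. f (e i)) v)
      \<longleftrightarrow> (\<forall>e'. bij_betw e' UNIV P \<longrightarrow> seq_convA I (\<lambda>k. \<Sum>i<k. (f \<circ> h) (e' i)) v)"
    unfolding bij by auto
  then show ?thesis
    using False assms by (simp add: has_sumA_def finite_image_iff)
qed

lemma seq_convA_diff:
  fixes s t :: "nat \<Rightarrow> ('i, 'k::ab_group_add) ser"
  assumes s: "seq_convA I s v" and t: "seq_convA I t w"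
  shows "seq_convA I (\<lambda>k. s k - t k) (v - w)"
  unfolding seq_convA_def
proof (intro conjI allI)
  have nz: "(s k - t k) m n \<noteq> 0 \<Longrightarrow> s k m n \<noteq> 0 \<or> t k m n \<noteq> 0" for k m n
    by auto
  have "{m. \<exists>k n. (s k - t k) m n \<noteq> 0} \<subseteq> {m. \<exists>k n. s k m n \<noteq> 0} \<union> {m. \<exists>k n. t k m n \<noteq> 0}"
    using nz by blast
  then show "finite {m. \<exists>k n. (s k - t k) m n \<noteq> 0}"
    using s t unfolding seq_convA_def by (blast intro: finite_subset)
  show "\<exists>b. \<forall>k n. (s k - t k) m n \<noteq> 0 \<longrightarrow> nle I b n" for m
  proof -
    obtain b1 b2 where "\<forall>k n. s k m n \<noteq> 0 \<longrightarrow> nle I b1 n" "\<forall>k n. t k m n \<noteq> 0 \<longrightarrow> nle I b2 n"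
      using s t unfolding seq_convA_def by blast
    then have "\<forall>k n. (s k - t k) m n \<noteq> 0 \<longrightarrow> nle I (\<lambda>i. min (b1 i) (b2 i)) n"
      using nz unfolding nle_def by (metis min.coboundedI1 min.coboundedI2)
    then show ?thesis by blast
  qed
  show "\<forall>\<^sub>F k in sequentially. (s k - t k) m n = (v - w) m n" for m n
  proof -
    have "\<forall>\<^sub>F k in sequentially. s k m n = v m n" "\<forall>\<^sub>F k in sequentially. t k m n = w m n"
      using s t unfolding seq_convA_def by auto
    then show ?thesis by eventually_elim simp
  qed
qed

lemma has_sumA_diff:
  fixes f g :: "'j \<Rightarrow> ('i, 'k::ab_group_add) ser"
  assumes "has_sumA I f J v" "has_sumA I g J w"
  shows "has_sumA I (\<lambda>j. f j - g j) J (v - w)"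
  using assms seq_convA_diff
  by (fastforce simp: has_sumA_def sum_subtractf)

lemma seq_convA_lower_bound:
  assumes "seq_convA I s v"
  obtains b where "\<And>k n. s k m n \<noteq> v m n \<Longrightarrow> nle I b n"
proof -
  obtain b where b: "\<And>k n. s k m n \<noteq> 0 \<Longrightarrow> nle I b n"
    using assms unfolding seq_convA_def by blast
  have "nle I b n" if ne: "s k m n \<noteq> v m n" for k n
  proof (cases "s k m n = 0")
    case True
    have "\<forall>\<^sub>F k in sequentially. s k m n = v m n"
      using assms unfolding seq_convA_def by blast
    then obtain k' where "s k' m n = v m n"
      using eventually_happens'[OF sequentially_bot] by blast
    with True ne show ?thesis
      using b[of k' n] by simp
  qed (use b in blast)
  then show ?thesis
    using that by blast
qed

text \<open>The bound \<open>b\<close> is chosen before the finite data \<open>N\<close> and \<open>S\<close>, so a limit can be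
  tested on the finite lattice interval between \<open>b\<close> and a given exponent.\<close>

lemma has_sumA_finite_approx:
  fixes f :: "'j \<Rightarrow> ('i, 'k::comm_monoid_add) ser"
  assumes sum: "has_sumA I f J v" and "countable J"
  obtains b where "\<And>(N :: ('i \<Rightarrow> int) set) S. finite N \<Longrightarrow> finite S \<Longrightarrow> S \<subseteq> J \<Longrightarrow>
      \<exists>F. finite F \<and> S \<subseteq> F \<and> F \<subseteq> J \<and> (\<forall>n\<in>N. (\<Sum>p\<in>F. f p) m n = v m n)
        \<and> (\<forall>n. (\<Sum>p\<in>F. f p) m n \<noteq> v m n \<longrightarrow> nle I b n)"
proof (cases "finite J")
  case True
  then show ?thesis
    using sum that[of 0] by (auto simp: has_sumA_def)
next
  case False
  define e where "e = from_nat_into J"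
  have e: "bij_betw e UNIV J"
    unfolding e_def using bij_betw_from_nat_into[OF \<open>countable J\<close> False] .
  define ps where "ps k = (\<Sum>i<k. f (e i))" for k
  have conv: "seq_convA I ps v"
    using sum False e unfolding has_sumA_def ps_def by blast
  then obtain b where bound: "\<And>k n. ps k m n \<noteq> v m n \<Longrightarrow> nle I b n"
    using seq_convA_lower_bound[where m = m] by blast
  show ?thesis
  proof (rule that)
    fix N :: "('i \<Rightarrow> int) set" and S assume "finite N" "finite S" "S \<subseteq> J"
    have "\<forall>\<^sub>F k in sequentially. \<forall>n\<in>N. ps k m n = v m n"
      using \<open>finite N\<close> conv by (simp add: eventually_ball_finite seq_convA_def)
    then have "\<forall>\<^sub>F k in sequentially. (\<forall>n\<in>N. ps k m n = v m n) \<and> S \<subseteq> e ` {..<k}"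
      using eventually_subset_image_lessThan[OF e \<open>finite S\<close> \<open>S \<subseteq> J\<close>] by (rule eventually_conj)
    then obtain k where k: "\<forall>n\<in>N. ps k m n = v m n" "S \<subseteq> e ` {..<k}"
      using eventually_happens'[OF sequentially_bot] by blast
    have "inj_on e {..<k}"
      using e by (auto simp: bij_betw_def inj_on_def)
    then have ps_k: "(\<Sum>p\<in>e ` {..<k}. f p) = ps k"
      by (simp add: ps_def sum.reindex)
    show "\<exists>F. finite F \<and> S \<subseteq> F \<and> F \<subseteq> J \<and> (\<forall>n\<in>N. (\<Sum>p\<in>F. f p) m n = v m n)
        \<and> (\<forall>n. (\<Sum>p\<in>F. f p) m n \<noteq> v m n \<longrightarrow> nle I b n)"
    proof (intro exI conjI)
      show "e ` {..<k} \<subseteq> J"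
        using e by (auto simp: bij_betw_def)
    qed (use k ps_k bound in simp_all)
  qed
qed

section \<open>Triangular systems and bases\<close>

lemma wf_triangular_system_solvable:
  fixes v :: "'a \<Rightarrow> 'k::comm_ring_1"
  assumes "wf R"
  shows "\<exists>g. (\<forall>n. g n + (\<Sum>k\<in>{k. (k, n) \<in> R}. g k * t k n) = v n)
    \<and> ((\<forall>n. v n = 0) \<longrightarrow> (\<forall>n. g n = 0))"
proof (cases "\<forall>n. v n = 0")
  case True
  then show ?thesis
    by (intro exI[of _ "\<lambda>_. 0"]) simp
next
  case False
  define F where "F g n = v n - (\<Sum>k\<in>{k. (k, n) \<in> R}. g k * t k n)" for g n
  have "adm_wf R F"
    unfolding adm_wf_def F_def by (auto intro!: sum.cong)
  then have "wfrec R F n = F (wfrec R F) n" for n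
    using assms by (simp add: wfrec_fixpoint[symmetric])
  then have "wfrec R F n + (\<Sum>k\<in>{k. (k, n) \<in> R}. wfrec R F k * t k n) = v n" for n
    unfolding F_def by (simp add: eq_diff_eq)
  with False show ?thesis
    by blast
qed

lemma is_basisA_image:
  fixes h :: "'j \<Rightarrow> ('i, 'k::comm_ring_1) ser"
  assumes inj: "inj_on h P" and "h ` P \<subseteq> C" "countable P"
    and exists: "\<And>v. v \<in> C \<Longrightarrow> \<exists>c. has_sumA I (\<lambda>p. smultA (c p) (h p)) P v"
    and unique: "\<And>c p. has_sumA I (\<lambda>p. smultA (c p) (h p)) P 0 \<Longrightarrow> p \<in> P \<Longrightarrow> c p = 0"
  shows "is_basisA I C (h ` P)"
  unfolding is_basisA_def
proof (intro conjI ballI)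
  fix v assume "v \<in> C"
  then obtain c where c: "has_sumA I (\<lambda>p. smultA (c p) (h p)) P v"
    using exists by blast
  define a where "a u = c (the_inv_into P h u)" for u
  have a_h: "a (h p) = c p" if "p \<in> P" for p
    using the_inv_into_f_f[OF inj that] by (simp add: a_def)
  have reindex: "has_sumA I (\<lambda>u. smultA (a' u) u) (h ` P) v
      \<longleftrightarrow> has_sumA I (\<lambda>p. smultA (a' (h p)) (h p)) P v" for a'
    using has_sumA_reindex[OF inj] by (simp add: comp_def)
  show "\<exists>a. has_sumA I (\<lambda>u. smultA (a u) u) (h ` P) v
      \<and> (\<forall>a'. has_sumA I (\<lambda>u. smultA (a' u) u) (h ` P) v \<longrightarrow> (\<forall>u\<in>h ` P. a' u = a u))"
  proof (intro exI conjI allI impI ballI)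
    show a: "has_sumA I (\<lambda>u. smultA (a u) u) (h ` P) v"
      unfolding reindex using c has_sumA_cong[of P "\<lambda>p. smultA (a (h p)) (h p)"] a_h by simp
    fix a' u assume "has_sumA I (\<lambda>u. smultA (a' u) u) (h ` P) v" and "u \<in> h ` P"
    then obtain p where p: "p \<in> P" "u = h p"
      by blast
    have "has_sumA I (\<lambda>p. smultA (a' (h p)) (h p) - smultA (a (h p)) (h p)) P (v - v)"
      using \<open>has_sumA I (\<lambda>u. smultA (a' u) u) (h ` P) v\<close> a
      unfolding reindex by (rule has_sumA_diff)
    moreover have "(\<lambda>p. smultA (a' (h p)) (h p) - smultA (a (h p)) (h p))
        = (\<lambda>p. smultA (a' (h p) - a (h p)) (h p))"
      by (simp add: fun_eq_iff smultA_def left_diff_distrib)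
    ultimately have "has_sumA I (\<lambda>p. smultA (a' (h p) - a (h p)) (h p)) P 0"
      by simp
    from unique[OF this p(1)] p(2) show "a' u = a u"
      by simp
  qed
qed (use assms in auto)

section \<open>Theta functions\<close>

locale pointed_theta_family =
  fixes U :: "'i set" and eps :: "'i \<Rightarrow> 'i \<Rightarrow> int"
    and theta :: "('i \<Rightarrow> int) \<Rightarrow> ('i, 'k::comm_ring_1) ser"
  assumes finite_U: "finite U"
    and theta_pointed: "m \<in> lat U \<Longrightarrow> pointed_at U m (theta m)"
begin

definition sigma_theta :: "('i \<Rightarrow> int) \<times> ('i \<Rightarrow> int) \<Rightarrow> ('i, 'k) ser" where
  "sigma_theta p = mulA (sigmaA U eps (fst p)) (theta (snd p))"

lemma sigma_theta_apply: "sigma_theta (k, j) m n = theta j (m + nB U eps k) (n - k)"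
  by (simp add: sigma_theta_def mulA_sigmaA)

lemma sigma_theta_nonzeroD:
  assumes "j \<in> lat U" "sigma_theta (k, j) m n \<noteq> 0"
  shows "m = j - nB U eps k" "nle U k n" "n - k \<in> lat U"
proof -
  have "m + nB U eps k = j" "n - k \<in> lat U" "nle U 0 (n - k)"
    using theta_pointed[OF assms(1)] assms(2) by (auto simp: sigma_theta_apply pointed_at_def)
  then show "m = j - nB U eps k" "nle U k n" "n - k \<in> lat U"
    by (auto simp: nle_0_diff_iff eq_diff_eq)
qed

lemma sigma_theta_leading: "j \<in> lat U \<Longrightarrow> sigma_theta (k, j) (j - nB U eps k) k = 1"
  using theta_pointed by (simp add: sigma_theta_apply pointed_at_def)

lemma inj_on_sigma_theta: "inj_on sigma_theta (lat U \<times> lat U)"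
proof (rule inj_onI, clarify)
  fix k j k' j'
  assume lat: "k \<in> lat U" "j \<in> lat U" "k' \<in> lat U" "j' \<in> lat U"
    and eq: "sigma_theta (k, j) = sigma_theta (k', j')"
  have "sigma_theta (k', j') (j - nB U eps k) k \<noteq> 0"
    using sigma_theta_leading[OF lat(2), of k] eq by simp
  then have j: "j - nB U eps k = j' - nB U eps k'" and "nle U k' k"
    using sigma_theta_nonzeroD[OF lat(4)] by auto
  have "sigma_theta (k, j) (j' - nB U eps k') k' \<noteq> 0"
    using sigma_theta_leading[OF lat(4), of k'] eq by simp
  then have "nle U k k'"
    using sigma_theta_nonzeroD[OF lat(2)] by auto
  with \<open>nle U k' k\<close> lat have "k = k'"
    by (blast intro: nle_antisym)
  with j show "k = k' \<and> j = j'"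
    by simp
qed

lemma sigma_theta_in_canA:
  assumes "p \<in> lat U \<times> lat U"
  shows "sigma_theta p \<in> canA U eps theta"
proof -
  have "smultA 1 (sigmaA U eps (fst p)) \<in> canA U eps theta"
    using assms by (auto intro: canA.sigma)
  then have "sigmaA U eps (fst p) \<in> canA U eps theta"
    by (simp add: smultA_def)
  moreover have "theta (snd p) \<in> canA U eps theta"
    using assms by (auto intro: canA.theta)
  ultimately show ?thesis
    unfolding sigma_theta_def by (rule canA.mul)
qed

lemma canA_subset_inA: "x \<in> canA U eps theta \<Longrightarrow> inA U x"
proof (induction rule: canA.induct)
  case (sigma n c)
  then show ?case by (intro inA_smultA inA_sigmaA)
next
  case (theta m)
  then show ?case by (intro inA_pointed_at[OF theta_pointed])
next
  case (add x y)
  from add.IH show ?case by (rule inA_add)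
qed (simp_all add: inA_mulA inA_smultA)

text \<open>A minimal \<open>k\<close> with nonzero coefficient in degree \<open>m\<close> contributes alone to the
  monomial \<open>z\<^sup>m \<zeta>\<^sup>k\<close>.\<close>

lemma sigma_theta_combination_nonzero:
  assumes F: "finite F" "F \<subseteq> lat U \<times> lat U" and p1: "(k1, j1) \<in> F" "c (k1, j1) \<noteq> 0"
  shows "\<exists>k0\<in>lat U. nle U k0 k1
    \<and> (\<Sum>p\<in>F. smultA (c p) (sigma_theta p)) (j1 - nB U eps k1) k0 \<noteq> 0"
proof -
  define m where "m = j1 - nB U eps k1"
  define q where "q k = (k, m + nB U eps k)" for k
  define T where "T = {k. q k \<in> F \<and> c (q k) \<noteq> 0 \<and> nle U k k1}"
  have "q k1 = (k1, j1)"
    by (simp add: q_def m_def)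
  then have "k1 \<in> T"
    using p1 by (simp add: T_def)
  moreover have "T \<subseteq> fst ` F" "T \<subseteq> lat U"
    using F(2) by (force simp: T_def q_def)+
  ultimately obtain k0 where k0: "k0 \<in> T" "k0 \<in> lat U"
    and k0_min: "\<And>k. k \<in> T \<Longrightarrow> nle U k k0 \<Longrightarrow> k = k0"
    using finite_lat_has_minimal[of T U] finite_surj[OF F(1)] by blast
  have q0: "q k0 \<in> F" "c (q k0) \<noteq> 0" "m + nB U eps k0 \<in> lat U"
    using k0(1) F(2) by (auto simp: T_def q_def)
  have others: "c p * sigma_theta p m k0 = 0" if "p \<in> F - {q k0}" for p
  proof (rule ccontr)
    assume nz: "c p * sigma_theta p m k0 \<noteq> 0"
    obtain k j where p: "p = (k, j)" by fastforce
    with that F(2) nz have "j \<in> lat U" "sigma_theta (k, j) m k0 \<noteq> 0"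
      by auto
    then have "m = j - nB U eps k" "nle U k k0"
      by (rule sigma_theta_nonzeroD)+
    with that nz p k0(1) have "k \<in> T"
      by (auto simp: T_def q_def intro: nle_trans)
    with \<open>nle U k k0\<close> k0_min have "p = q k0"
      using \<open>m = j - nB U eps k\<close> p by (auto simp: q_def)
    with that show False
      by blast
  qed
  have "(\<Sum>p\<in>F. smultA (c p) (sigma_theta p)) m k0 = (\<Sum>p\<in>F. c p * sigma_theta p m k0)"
    by (simp add: sum_ser_apply smultA_def)
  also have "\<dots> = c (q k0) * sigma_theta (q k0) m k0"
    using q0(1) others F(1) by (simp add: sum.remove sum.neutral)
  also have "\<dots> = c (q k0)"
    using sigma_theta_leading[OF q0(3), of k0] by (simp add: q_def)
  finally show ?thesis
    using k0 q0(2) unfolding T_def m_def by auto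
qed

lemma sigma_theta_expansion_unique:
  assumes sum: "has_sumA U (\<lambda>p. smultA (c p) (sigma_theta p)) (lat U \<times> lat U) 0"
    and p: "p \<in> lat U \<times> lat U"
  shows "c p = 0"
proof (rule ccontr)
  obtain k1 j1 where p1: "p = (k1, j1)" by fastforce
  assume "c p \<noteq> 0"
  define m where "m = j1 - nB U eps k1"
  let ?sum = "\<lambda>F. (\<Sum>p\<in>F. smultA (c p) (sigma_theta p)) m"
  have countable: "countable (lat U \<times> lat U)"
    using countable_lat[OF finite_U] by simp
  obtain b where approx: "\<And>N S. finite N \<Longrightarrow> finite S \<Longrightarrow> S \<subseteq> lat U \<times> lat U \<Longrightarrow>
      \<exists>F. finite F \<and> S \<subseteq> F \<and> F \<subseteq> lat U \<times> lat U \<and> (\<forall>n\<in>N. ?sum F n = 0 m n)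
        \<and> (\<forall>n. ?sum F n \<noteq> 0 m n \<longrightarrow> nle U b n)"
    using has_sumA_finite_approx[OF sum countable, where m = m] by blast
  define box where "box = lat_interval U b k1"
  have "finite box"
    unfolding box_def by (rule finite_lat_interval[OF finite_U])
  moreover have "{(k1, j1)} \<subseteq> lat U \<times> lat U"
    using p p1 by simp
  ultimately obtain F where F: "finite F" "{(k1, j1)} \<subseteq> F" "F \<subseteq> lat U \<times> lat U"
      and vanish: "\<forall>n\<in>box. ?sum F n = 0" and bounded: "\<forall>n. ?sum F n \<noteq> 0 \<longrightarrow> nle U b n"
    using approx[of box "{(k1, j1)}"] by auto
  obtain k0 where "k0 \<in> lat U" "nle U k0 k1" and nonzero: "?sum F k0 \<noteq> 0"
    using sigma_theta_combination_nonzero[of F k1 j1 c] F \<open>c p \<noteq> 0\<close> p1 unfolding m_def by auto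
  with bounded have "k0 \<in> box"
    unfolding box_def lat_interval_def by blast
  with vanish nonzero show False
    by blast
qed

text \<open>\<open>G m\<close> solves the unitriangular system of degree \<open>m\<close>; its diagonal entries are
  the constant terms \<open>1\<close> of the theta functions.\<close>

lemma triangular_coefficients:
  assumes bound: "\<And>m n. v m n \<noteq> 0 \<Longrightarrow> nle U b n"
  obtains G where
    "\<And>m n. m \<in> lat U \<Longrightarrow> n \<in> lat U \<Longrightarrow> nle U b n \<Longrightarrow>
      v m n = (\<Sum>k\<in>lat_interval U b n. G m k * sigma_theta (k, m + nB U eps k) m n)"
    "\<And>m k. G m k \<noteq> 0 \<Longrightarrow> nle U b k \<and> (\<exists>n. v m n \<noteq> 0)"
proof -
  define t where "t m k n = sigma_theta (k, m + nB U eps k) m n" for m k n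
  have "\<forall>m. \<exists>g. (\<forall>n. g n + (\<Sum>k\<in>{k. (k, n) \<in> lat_below U b}. g k * t m k n) = v m n)
      \<and> ((\<forall>n. v m n = 0) \<longrightarrow> (\<forall>n. g n = 0))"
    using wf_triangular_system_solvable[OF wf_lat_below[OF finite_U]] by blast
  from choice[OF this] obtain G
    where G: "\<forall>m. (\<forall>n. G m n + (\<Sum>k\<in>{k. (k, n) \<in> lat_below U b}. G m k * t m k n) = v m n)
      \<and> ((\<forall>n. v m n = 0) \<longrightarrow> (\<forall>n. G m n = 0))" ..
  then have G_eq: "\<And>m n. G m n + (\<Sum>k\<in>{k. (k, n) \<in> lat_below U b}. G m k * t m k n) = v m n"
    and G_zero: "\<And>m k. \<forall>n. v m n = 0 \<Longrightarrow> G m k = 0"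
    by auto
  show thesis
  proof (rule that)
    fix m n assume m: "m \<in> lat U" and n: "n \<in> lat U" "nle U b n"
    have "t m n n = 1"
      using sigma_theta_leading[of "m + nB U eps n" n] m by (simp add: t_def lat_add)
    moreover have "finite {k. (k, n) \<in> lat_below U b}"
      using finite_lat_interval[OF finite_U, of b n] lat_interval_eq_insert_lat_below[OF n] by simp
    ultimately show "v m n = (\<Sum>k\<in>lat_interval U b n. G m k * sigma_theta (k, m + nB U eps k) m n)"
      using G_eq[of m n] by (simp add: lat_interval_eq_insert_lat_below[OF n] t_def)
  next
    fix m k assume "G m k \<noteq> 0"
    moreover have "G m k = 0" if "\<not> nle U b k"
    proof -
      have "{k'. (k', k) \<in> lat_below U b} = {}" "v m k = 0"
        using that bound lat_below_bound by blast+
      then show ?thesis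
        using G_eq[of m k] by simp
    qed
    ultimately show "nle U b k \<and> (\<exists>n. v m n \<noteq> 0)"
      using G_zero by blast
  qed
qed

text \<open>\<open>G m k\<close> is the coefficient of \<open>\<sigma>\<^sup>k \<theta>\<^bsub>m + kB\<^esub>\<close>, the basis element
  with leading monomial \<open>z\<^sup>m \<zeta>\<^sup>k\<close>.\<close>

definition coeff_term :: "(('i \<Rightarrow> int) \<Rightarrow> ('i \<Rightarrow> int) \<Rightarrow> 'k) \<Rightarrow> ('i \<Rightarrow> int) \<times> ('i \<Rightarrow> int) \<Rightarrow> ('i, 'k) ser" where
  "coeff_term G p = smultA (G (snd p - nB U eps (fst p)) (fst p)) (sigma_theta p)"

lemma coeff_term_nonzeroD:
  assumes "(k, j) \<in> lat U \<times> lat U" "coeff_term G (k, j) m n \<noteq> 0"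
  shows "j = m + nB U eps k" "nle U k n" "m \<in> lat U" "n \<in> lat U" "G m k \<noteq> 0"
proof -
  have "G (j - nB U eps k) k \<noteq> 0" "sigma_theta (k, j) m n \<noteq> 0"
    using assms(2) by (auto simp: coeff_term_def smultA_def)
  moreover have "j \<in> lat U" "k \<in> lat U"
    using assms(1) by auto
  ultimately have m: "m = j - nB U eps k" and "nle U k n" "n - k \<in> lat U" "G m k \<noteq> 0"
    using sigma_theta_nonzeroD by auto
  then show "j = m + nB U eps k" "nle U k n" "G m k \<noteq> 0"
    by simp_all
  show "m \<in> lat U"
    using m \<open>j \<in> lat U\<close> by auto
  show "n \<in> lat U"
    using lat_add[OF \<open>n - k \<in> lat U\<close> \<open>k \<in> lat U\<close>] by simp
qed

lemma sum_coeff_term_degree: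
  "(\<Sum>p\<in>(\<lambda>k. (k, m + nB U eps k)) ` K. coeff_term G p m n)
    = (\<Sum>k\<in>K. G m k * sigma_theta (k, m + nB U eps k) m n)"
proof -
  have "inj_on (\<lambda>k. (k, m + nB U eps k)) K"
    by (rule inj_onI) simp
  then show ?thesis
    by (simp add: sum.reindex coeff_term_def smultA_def)
qed

lemma has_sumA_coeff_term:
  assumes v: "inA U v" and bound: "\<And>m n. v m n \<noteq> 0 \<Longrightarrow> nle U b n"
    and expand: "\<And>m n. m \<in> lat U \<Longrightarrow> n \<in> lat U \<Longrightarrow> nle U b n \<Longrightarrow>
      v m n = (\<Sum>k\<in>lat_interval U b n. G m k * sigma_theta (k, m + nB U eps k) m n)"
    and G_nonzero: "\<And>m k. G m k \<noteq> 0 \<Longrightarrow> nle U b k \<and> (\<exists>n. v m n \<noteq> 0)"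
  shows "has_sumA U (coeff_term G) (lat U \<times> lat U) v"
proof (rule has_sumA_intro)
  have support: "p = (k, m + nB U eps k) \<and> k \<in> lat_interval U b n \<and> m \<in> lat U \<and> n \<in> lat U
      \<and> nle U b n \<and> (\<exists>n'. v m n' \<noteq> 0)"
    if "p \<in> lat U \<times> lat U" "p = (k, j)" "coeff_term G p m n \<noteq> 0" for p k j m n
    using coeff_term_nonzeroD[of k j G m n] G_nonzero[of m k] that
    by (auto simp: lat_interval_def intro: nle_trans)
  have "{m. \<exists>p\<in>lat U \<times> lat U. \<exists>n. coeff_term G p m n \<noteq> 0} \<subseteq> {m. \<exists>n. v m n \<noteq> 0}"
  proof
    fix m assume "m \<in> {m. \<exists>p\<in>lat U \<times> lat U. \<exists>n. coeff_term G p m n \<noteq> 0}"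
    then obtain k j n where "(k, j) \<in> lat U \<times> lat U" "coeff_term G (k, j) m n \<noteq> 0"
      by auto
    then show "m \<in> {m. \<exists>n. v m n \<noteq> 0}"
      using support[of "(k, j)" k j m n] by simp
  qed
  then show "finite {m. \<exists>p\<in>lat U \<times> lat U. \<exists>n. coeff_term G p m n \<noteq> 0}"
    using v unfolding inA_def by (blast intro: finite_subset)
  show "nle U b n" if "p \<in> lat U \<times> lat U" "coeff_term G p m n \<noteq> 0" for p m n
    using support[of p] that by (metis prod.collapse)
  show "\<exists>S. finite S \<and> S \<subseteq> lat U \<times> lat U \<and> (\<forall>p\<in>lat U \<times> lat U - S. coeff_term G p m n = 0)
      \<and> v m n = (\<Sum>p\<in>S. coeff_term G p m n)" for m n
  proof (cases "m \<in> lat U \<and> n \<in> lat U \<and> nle U b n")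
    case False
    then have "coeff_term G p m n = 0" if "p \<in> lat U \<times> lat U" for p
      using support[of p] that by (metis prod.collapse)
    moreover have "v m n = 0"
      using False bound v unfolding inA_def by blast
    ultimately show ?thesis
      by (intro exI[of _ "{}"]) auto
  next
    case True
    let ?S = "(\<lambda>k. (k, m + nB U eps k)) ` lat_interval U b n"
    show ?thesis
    proof (intro exI[of _ ?S] conjI ballI)
      show "finite ?S"
        using finite_lat_interval[OF finite_U] by blast
      show "?S \<subseteq> lat U \<times> lat U"
        using True by (auto simp: lat_interval_def)
      show "v m n = (\<Sum>p\<in>?S. coeff_term G p m n)"
        using expand True by (simp add: sum_coeff_term_degree)
      fix p assume p_out: "p \<in> lat U \<times> lat U - ?S"
      obtain k j where p: "p = (k, j)" by fastforce
      show "coeff_term G p m n = 0"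
      proof (rule ccontr)
        assume "coeff_term G p m n \<noteq> 0"
        with p_out p have "p = (k, m + nB U eps k)" "k \<in> lat_interval U b n"
          using support[of p k j m n] by auto
        with p_out show False
          by blast
      qed
    qed
  qed
qed

lemma sigma_theta_expansion_exists:
  assumes v: "inA U v"
  shows "\<exists>c. has_sumA U (\<lambda>p. smultA (c p) (sigma_theta p)) (lat U \<times> lat U) v"
proof -
  obtain b where bound: "\<And>m n. v m n \<noteq> 0 \<Longrightarrow> nle U b n"
    using inA_uniform_bound[OF v] by blast
  then obtain G where "\<And>m n. m \<in> lat U \<Longrightarrow> n \<in> lat U \<Longrightarrow> nle U b n \<Longrightarrow>
      v m n = (\<Sum>k\<in>lat_interval U b n. G m k * sigma_theta (k, m + nB U eps k) m n)"
    and "\<And>m k. G m k \<noteq> 0 \<Longrightarrow> nle U b k \<and> (\<exists>n. v m n \<noteq> 0)"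
    by (rule triangular_coefficients[where v = v and b = b]) blast+
  with v bound have "has_sumA U (coeff_term G) (lat U \<times> lat U) v"
    by (rule has_sumA_coeff_term)
  then show ?thesis
    unfolding coeff_term_def by (rule exI[where x = "\<lambda>p. G (snd p - nB U eps (fst p)) (fst p)"])
qed

lemma is_basisA_sigma_theta: "is_basisA U (canA U eps theta) (sigma_theta ` (lat U \<times> lat U))"
proof (rule is_basisA_image[OF inj_on_sigma_theta])
  show "sigma_theta ` (lat U \<times> lat U) \<subseteq> canA U eps theta"
    using sigma_theta_in_canA by blast
  show "countable (lat U \<times> lat U)"
    using countable_lat[OF finite_U] by simp
qed (use canA_subset_inA sigma_theta_expansion_exists sigma_theta_expansion_unique in blast)+

end

theorem mainTheorem4:
  fixes I Iuf :: "'i set"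
    and eps :: "'i \<Rightarrow> 'i \<Rightarrow> int"
    and d :: "'i \<Rightarrow> int"
    and theta :: "('i \<Rightarrow> int) \<Rightarrow> ('i, 'k::field_char_0) ser"
  assumes "finite I" and "Iuf \<subseteq> I"
    and "\<forall>i\<in>Iuf. d i > 0"
    and "\<forall>i\<in>Iuf. \<forall>j\<in>Iuf. d i * eps i j = - (d j * eps j i)"
    and nondeg: "\<forall>a :: 'i \<Rightarrow> rat.
            (\<forall>j\<in>I - Iuf. (\<Sum>i\<in>Iuf. a i * of_int (eps i j)) = 0) \<longrightarrow> (\<forall>i\<in>Iuf. a i = 0)"
    and theta_pointed: "\<forall>m\<in>lat Iuf. pointed_at Iuf m (theta m)"
    and theta_mult: "\<forall>p1\<in>lat Iuf. \<forall>p2\<in>lat Iuf. \<exists>a :: ('i \<Rightarrow> int) \<Rightarrow> ('i \<Rightarrow> int) \<Rightarrow> nat.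
            (\<forall>m n. a m n \<noteq> 0 \<longrightarrow> m \<in> lat Iuf \<and> n \<in> lat Iuf \<and> nle Iuf 0 n)
          \<and> has_sumA Iuf (\<lambda>(m, n). smultA (of_nat (a m n)) (mulA (sigmaA Iuf eps n) (theta m)))
                (lat Iuf \<times> lat Iuf) (mulA (theta p1) (theta p2))"
  shows "reduced_basisA Iuf eps (canA Iuf eps theta) theta"
proof -
  interpret pointed_theta_family Iuf eps theta
    using assms(1,2) theta_pointed by unfold_locales (auto intro: finite_subset)
  have "{mulA (sigmaA Iuf eps n) (theta m) | n m. n \<in> lat Iuf \<and> m \<in> lat Iuf}
      = sigma_theta ` (lat Iuf \<times> lat Iuf)"
    by (force simp: sigma_theta_def)
  then show ?thesis
    unfolding reduced_basisA_def using is_basisA_sigma_theta theta_pointed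
    by (auto intro: canA.theta)
qed

end
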